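(* Let $\mu\in P_2(\mathbb{R}^d)$ be a probabilistic frame which is not tight, and let $\delta:=\lambda_d(\mu)-\lambda_1(\mu)>0$. Then for every tight probabilistic frame $\nu\in P_2(\mathbb{R}^d)$, $$W_2(\mu,\nu)\ge\frac{\delta}{4\,(M_2(\mu)+M_2(\nu))}.$$
   Context: For $p\ge1$, $P_p(\mathbb{R}^d)$ denotes the set of Borel probability measures $\mu$ on $\mathbb{R}^d$ with $M_p^p(\mu):=\int\|x\|^p\,d\mu(x)<\infty$, equipped with the $p$-Wasserstein distance $W_p(\mu,\nu)=\big(\inf_{\gamma\in\Gamma(\mu,\nu)}\iint\|x-y\|^p\,d\gamma(x,y)\big)^{1/p}$, where $\Gamma(\mu,\nu)$ is the set of couplings of $\mu$ and $\nu$. A probability measure $\mu$ on $\mathbb{R}^d$ is a probabilistic frame if there exist $0<A\le B<\infty$ with $A\|x\|^2\le\int\langle x,y\rangle^2\,d\mu(y)\le B\|x\|^2$ for all $x$; it is tight if this holds with $A=B$. For $\mu\in P_2(\mathbb{R}^d)$, $S_\mu=\int yy^\top d\mu(y)$ is the frame operator and $\lambda_1(\mu)\le\dots\le\lambda_d(\mu)$ denote its eigenvalues. *)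

theory Defs
  imports "HOL-Probability.Probability"
begin

text \<open>Probability measures on R^d (d = CARD('n)) with finite second moment.\<close>
definition P2 :: "(real^'n) measure \<Rightarrow> bool" where
  "P2 \<mu> \<longleftrightarrow> prob_space \<mu> \<and> sets \<mu> = sets borel \<and> integrable \<mu> (\<lambda>x. norm x ^ 2)"

definition M2 :: "(real^'n) measure \<Rightarrow> real" where
  "M2 \<mu> = sqrt (\<integral>x. norm x ^ 2 \<partial>\<mu>)"

definition coupling :: "((real^'n) \<times> (real^'n)) measure \<Rightarrow> (real^'n) measure \<Rightarrow> (real^'n) measure \<Rightarrow> bool" where
  "coupling \<gamma> \<mu> \<nu> \<longleftrightarrow> prob_space \<gamma> \<and> sets \<gamma> = sets borel \<and>
      distr \<gamma> borel fst = \<mu> \<and> distr \<gamma> borel snd = \<nu>"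

definition W2 :: "(real^'n) measure \<Rightarrow> (real^'n) measure \<Rightarrow> real" where
  "W2 \<mu> \<nu> = sqrt (Inf {(\<integral>p. norm (fst p - snd p) ^ 2 \<partial>\<gamma>) | \<gamma>. coupling \<gamma> \<mu> \<nu>})"

definition prob_frame :: "(real^'n) measure \<Rightarrow> bool" where
  "prob_frame \<mu> \<longleftrightarrow> (\<exists>A B. 0 < A \<and> A \<le> B \<and>
      (\<forall>x. A * norm x ^ 2 \<le> (\<integral>y. (x \<bullet> y) ^ 2 \<partial>\<mu>) \<and> (\<integral>y. (x \<bullet> y) ^ 2 \<partial>\<mu>) \<le> B * norm x ^ 2))"

definition tight_prob_frame :: "(real^'n) measure \<Rightarrow> bool" where
  "tight_prob_frame \<mu> \<longleftrightarrow> (\<exists>A. 0 < A \<and> (\<forall>x. (\<integral>y. (x \<bullet> y) ^ 2 \<partial>\<mu>) = A * norm x ^ 2))"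

definition frame_op :: "(real^'n) measure \<Rightarrow> real^'n^'n" where
  "frame_op \<mu> = (\<chi> i j. \<integral>y. y $ i * y $ j \<partial>\<mu>)"

definition eigenvalues :: "real^'n^'n \<Rightarrow> real set" where
  "eigenvalues S = {l. \<exists>v. v \<noteq> 0 \<and> S *v v = l *\<^sub>R v}"

definition lambda_min :: "(real^'n) measure \<Rightarrow> real" where
  "lambda_min \<mu> = Min (eigenvalues (frame_op \<mu>))"

definition lambda_max :: "(real^'n) measure \<Rightarrow> real" where
  "lambda_max \<mu> = Max (eigenvalues (frame_op \<mu>))"

end

theory Submission
  imports Defs
begin

text \<open>
  If \<open>v\<close> is an eigenvector of \<open>S\<^sub>\<mu>\<close> with eigenvalue \<open>l\<close>, then \<open>l \<parallel>v\<parallel>\<^sup>2 = \<integral>\<langle>v,x\<rangle>\<^sup>2 d\<mu>\<close>,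
  while tightness of \<open>\<nu>\<close> with bound \<open>A\<close> gives \<open>A \<parallel>v\<parallel>\<^sup>2 = \<integral>\<langle>v,y\<rangle>\<^sup>2 d\<nu>\<close>. Along any
  coupling \<open>\<gamma>\<close> the difference of the two integrals is \<open>\<integral>\<langle>v,x-y\<rangle>\<langle>v,x+y\<rangle> d\<gamma>\<close>, which
  Cauchy--Schwarz and Minkowski bound by \<open>\<parallel>v\<parallel>\<^sup>2 (\<integral>\<parallel>x-y\<parallel>\<^sup>2 d\<gamma>)\<^sup>1\<^sup>/\<^sup>2 (M\<^sub>2(\<mu>) + M\<^sub>2(\<nu>))\<close>.
  So every eigenvalue of \<open>S\<^sub>\<mu>\<close> lies within \<open>W\<^sub>2(\<mu>,\<nu>) (M\<^sub>2(\<mu>) + M\<^sub>2(\<nu>))\<close> of \<open>A\<close>, whence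
  \<open>\<lambda>\<^sub>d(\<mu>) - \<lambda>\<^sub>1(\<mu>) \<le> 2 W\<^sub>2(\<mu>,\<nu>) (M\<^sub>2(\<mu>) + M\<^sub>2(\<nu>))\<close>.
\<close>

lemma integral_abs_mult_le_sqrt:
  fixes f g :: "'a \<Rightarrow> real"
  assumes [measurable]: "f \<in> borel_measurable M" "g \<in> borel_measurable M"
    and f2: "integrable M (\<lambda>x. f x ^ 2)" and g2: "integrable M (\<lambda>x. g x ^ 2)"
  shows "integrable M (\<lambda>x. f x * g x)"
    and "(\<integral>x. \<bar>f x * g x\<bar> \<partial>M) \<le> sqrt (\<integral>x. f x ^ 2 \<partial>M) * sqrt (\<integral>x. g x ^ 2 \<partial>M)"
proof -
  have amgm: "\<bar>f x * g x\<bar> \<le> f x ^ 2 + g x ^ 2" for x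
  proof -
    have "2 * (\<bar>f x\<bar> * \<bar>g x\<bar>) \<le> f x ^ 2 + g x ^ 2"
      using sum_squares_bound[of "\<bar>f x\<bar>" "\<bar>g x\<bar>"] by (simp add: mult.assoc)
    moreover have "0 \<le> \<bar>f x\<bar> * \<bar>g x\<bar>" by simp
    ultimately show ?thesis unfolding abs_mult by linarith
  qed
  show int: "integrable M (\<lambda>x. f x * g x)"
  proof (rule Bochner_Integration.integrable_bound[OF Bochner_Integration.integrable_add[OF f2 g2]])
    show "AE x in M. norm (f x * g x) \<le> norm (f x ^ 2 + g x ^ 2)"
      using amgm by (intro AE_I2) simp
  qed measurable
  have nn: "(\<integral>\<^sup>+x. ennreal (h x) \<partial>M) = ennreal (\<integral>x. h x \<partial>M)"
    if "integrable M h" "\<And>x. h x \<ge> 0" for h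
    using that by (intro nn_integral_eq_integral) auto
  have F: "(\<integral>\<^sup>+x. ennreal \<bar>f x\<bar> ^ 2 \<partial>M) = ennreal (\<integral>x. f x ^ 2 \<partial>M)"
   and G: "(\<integral>\<^sup>+x. ennreal \<bar>g x\<bar> ^ 2 \<partial>M) = ennreal (\<integral>x. g x ^ 2 \<partial>M)"
    using nn[OF f2] nn[OF g2] by (simp_all add: ennreal_power)
  have "(\<integral>\<^sup>+x. ennreal \<bar>f x\<bar> * ennreal \<bar>g x\<bar> \<partial>M) = (\<integral>\<^sup>+x. ennreal \<bar>f x * g x\<bar> \<partial>M)"
    by (simp add: abs_mult ennreal_mult)
  also have "\<dots> = ennreal (\<integral>x. \<bar>f x * g x\<bar> \<partial>M)"
    using int by (intro nn) auto
  finally have FG: "(\<integral>\<^sup>+x. ennreal \<bar>f x\<bar> * ennreal \<bar>g x\<bar> \<partial>M) = ennreal (\<integral>x. \<bar>f x * g x\<bar> \<partial>M)" .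
  have "(\<integral>\<^sup>+x. ennreal \<bar>f x\<bar> * ennreal \<bar>g x\<bar> \<partial>M)\<^sup>2
        \<le> (\<integral>\<^sup>+x. ennreal \<bar>f x\<bar> ^ 2 \<partial>M) * (\<integral>\<^sup>+x. ennreal \<bar>g x\<bar> ^ 2 \<partial>M)"
    by (rule Cauchy_Schwarz_nn_integral) auto
  hence "ennreal ((\<integral>x. \<bar>f x * g x\<bar> \<partial>M)\<^sup>2) \<le> ennreal ((\<integral>x. f x ^ 2 \<partial>M) * (\<integral>x. g x ^ 2 \<partial>M))"
    unfolding FG F G by (simp add: ennreal_power ennreal_mult)
  hence "(\<integral>x. \<bar>f x * g x\<bar> \<partial>M)\<^sup>2 \<le> (\<integral>x. f x ^ 2 \<partial>M) * (\<integral>x. g x ^ 2 \<partial>M)"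
    by simp
  thus "(\<integral>x. \<bar>f x * g x\<bar> \<partial>M) \<le> sqrt (\<integral>x. f x ^ 2 \<partial>M) * sqrt (\<integral>x. g x ^ 2 \<partial>M)"
    by (metis real_le_rsqrt real_sqrt_mult)
qed

lemma sqrt_integral_norm_add_square_le:
  fixes f g :: "'a \<Rightarrow> 'b::{real_normed_vector, second_countable_topology}"
  assumes [measurable]: "f \<in> borel_measurable M" "g \<in> borel_measurable M"
    and f2: "integrable M (\<lambda>x. norm (f x) ^ 2)" and g2: "integrable M (\<lambda>x. norm (g x) ^ 2)"
  shows "integrable M (\<lambda>x. norm (f x + g x) ^ 2)"
    and "sqrt (\<integral>x. norm (f x + g x) ^ 2 \<partial>M)
         \<le> sqrt (\<integral>x. norm (f x) ^ 2 \<partial>M) + sqrt (\<integral>x. norm (g x) ^ 2 \<partial>M)"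
proof -
  define a where "a = (\<integral>x. norm (f x) ^ 2 \<partial>M)"
  define b where "b = (\<integral>x. norm (g x) ^ 2 \<partial>M)"
  define h where "h x = norm (f x) ^ 2 + 2 * (norm (f x) * norm (g x)) + norm (g x) ^ 2" for x
  note cs = integral_abs_mult_le_sqrt[of "\<lambda>x. norm (f x)" M "\<lambda>x. norm (g x)", OF _ _ f2 g2]
  have ih: "integrable M h"
    unfolding h_def using f2 g2 cs(1) by auto
  have pw: "norm (f x + g x) ^ 2 \<le> h x" for x
  proof -
    have "norm (f x + g x) ^ 2 \<le> (norm (f x) + norm (g x)) ^ 2"
      by (rule power_mono[OF norm_triangle_ineq norm_ge_zero])
    thus ?thesis by (simp add: h_def power2_sum)
  qed
  show int: "integrable M (\<lambda>x. norm (f x + g x) ^ 2)"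
  proof (rule Bochner_Integration.integrable_bound[OF ih])
    show "AE x in M. norm (norm (f x + g x) ^ 2) \<le> norm (h x)"
      using pw by (auto intro: order_trans[OF _ abs_ge_self])
  qed simp
  have "(\<integral>x. norm (f x + g x) ^ 2 \<partial>M) \<le> (\<integral>x. h x \<partial>M)"
    by (rule integral_mono[OF int ih pw])
  also have "\<dots> = a + 2 * (\<integral>x. \<bar>norm (f x) * norm (g x)\<bar> \<partial>M) + b"
    using f2 g2 cs(1) by (simp add: h_def a_def b_def)
  also have "\<dots> \<le> a + 2 * (sqrt a * sqrt b) + b"
    using cs(2) by (simp add: a_def b_def)
  also have "\<dots> = (sqrt a + sqrt b)\<^sup>2"
    by (simp add: a_def b_def power2_sum)
  finally have "sqrt (\<integral>x. norm (f x + g x) ^ 2 \<partial>M) \<le> sqrt a + sqrt b"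
    by (intro real_le_lsqrt) (auto simp: a_def b_def)
  thus "sqrt (\<integral>x. norm (f x + g x) ^ 2 \<partial>M)
        \<le> sqrt (\<integral>x. norm (f x) ^ 2 \<partial>M) + sqrt (\<integral>x. norm (g x) ^ 2 \<partial>M)"
    by (simp only: a_def b_def)
qed

lemma measurable_sets_borel_prod:
  fixes M :: "('a::second_countable_topology \<times> 'b::second_countable_topology) measure"
  assumes "sets M = sets borel" and "f \<in> borel \<Otimes>\<^sub>M borel \<rightarrow>\<^sub>M N"
  shows "f \<in> M \<rightarrow>\<^sub>M N"
  using assms measurable_cong_sets[of M "borel \<Otimes>\<^sub>M borel" N N] by (simp add: borel_prod)

lemma coupling_measurable_fst_snd:
  assumes "coupling \<gamma> \<mu> \<nu>"
  shows "fst \<in> \<gamma> \<rightarrow>\<^sub>M borel" and "snd \<in> \<gamma> \<rightarrow>\<^sub>M borel"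
  using assms unfolding coupling_def
  by (auto intro!: measurable_sets_borel_prod)

lemma coupling_marginals:
  fixes f :: "real^'n \<Rightarrow> real"
  assumes "coupling \<gamma> \<mu> \<nu>" and f: "f \<in> borel_measurable borel"
  shows "(\<integral>x. f x \<partial>\<mu>) = (\<integral>p. f (fst p) \<partial>\<gamma>)"
    and "(\<integral>y. f y \<partial>\<nu>) = (\<integral>p. f (snd p) \<partial>\<gamma>)"
    and "integrable \<mu> f \<longleftrightarrow> integrable \<gamma> (\<lambda>p. f (fst p))"
    and "integrable \<nu> f \<longleftrightarrow> integrable \<gamma> (\<lambda>p. f (snd p))"
proof -
  have \<mu>: "\<mu> = distr \<gamma> borel fst" and \<nu>: "\<nu> = distr \<gamma> borel snd"
    using assms(1) unfolding coupling_def by auto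
  note m = coupling_measurable_fst_snd[OF assms(1)]
  show "(\<integral>x. f x \<partial>\<mu>) = (\<integral>p. f (fst p) \<partial>\<gamma>)"
    unfolding \<mu> by (rule integral_distr[OF m(1) f])
  show "(\<integral>y. f y \<partial>\<nu>) = (\<integral>p. f (snd p) \<partial>\<gamma>)"
    unfolding \<nu> by (rule integral_distr[OF m(2) f])
  show "integrable \<mu> f \<longleftrightarrow> integrable \<gamma> (\<lambda>p. f (fst p))"
    unfolding \<mu> by (rule integrable_distr_eq[OF m(1) f])
  show "integrable \<nu> f \<longleftrightarrow> integrable \<gamma> (\<lambda>p. f (snd p))"
    unfolding \<nu> by (rule integrable_distr_eq[OF m(2) f])
qed

lemma frame_op_quadratic_form:
  fixes \<mu> :: "(real^'n) measure"
  assumes s: "sets \<mu> = sets borel" and i2: "integrable \<mu> (\<lambda>x. norm x ^ 2)"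
  shows "v \<bullet> (frame_op \<mu> *v v) = (\<integral>y. (v \<bullet> y)\<^sup>2 \<partial>\<mu>)"
proof -
  have ij: "integrable \<mu> (\<lambda>y. y$i * y$j)" for i j
  proof (rule Bochner_Integration.integrable_bound[OF i2])
    show "(\<lambda>y. y$i * y$j) \<in> borel_measurable \<mu>"
      by (subst measurable_cong_sets[OF s refl]) measurable
    have "\<bar>x$i\<bar> * \<bar>x$j\<bar> \<le> norm x * norm x" for x :: "real^'n"
      by (intro mult_mono component_le_norm_cart) auto
    thus "AE x in \<mu>. norm (x $ i * x $ j) \<le> norm (norm x ^ 2)"
      by (simp add: abs_mult power2_eq_square)
  qed
  have "v \<bullet> (frame_op \<mu> *v v) = (\<Sum>i\<in>UNIV. \<Sum>j\<in>UNIV. v$i * v$j * (\<integral>y. y$i * y$j \<partial>\<mu>))"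
    by (simp add: inner_vec_def matrix_vector_mult_def frame_op_def sum_distrib_left mult_ac)
  also have "\<dots> = (\<integral>y. (\<Sum>i\<in>UNIV. \<Sum>j\<in>UNIV. v$i * v$j * (y$i * y$j)) \<partial>\<mu>)"
    using ij by (simp add: integral_sum)
  also have "\<dots> = (\<integral>y. (v \<bullet> y)\<^sup>2 \<partial>\<mu>)"
    by (rule Bochner_Integration.integral_cong)
       (simp_all add: inner_vec_def power2_eq_square sum_product mult_ac)
  finally show ?thesis .
qed

lemma quadratic_form_coupling_diff:
  fixes \<mu> \<nu> :: "(real^'n) measure"
  assumes "P2 \<mu>" and "P2 \<nu>" and cpl: "coupling \<gamma> \<mu> \<nu>"
  shows "\<bar>(\<integral>x. (v \<bullet> x)\<^sup>2 \<partial>\<mu>) - (\<integral>y. (v \<bullet> y)\<^sup>2 \<partial>\<nu>)\<bar>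
         \<le> norm v ^ 2 * (sqrt (\<integral>p. norm (fst p - snd p) ^ 2 \<partial>\<gamma>) * (M2 \<mu> + M2 \<nu>))"
proof -
  have mf: "fst \<in> \<gamma> \<rightarrow>\<^sub>M borel" and ms: "snd \<in> \<gamma> \<rightarrow>\<^sub>M borel"
    using coupling_measurable_fst_snd[OF cpl] by auto
  have msq: "(\<lambda>x::real^'n. norm x ^ 2) \<in> borel_measurable borel"
    by measurable
  have i\<mu>: "integrable \<gamma> (\<lambda>p. norm (fst p) ^ 2)" and i\<nu>: "integrable \<gamma> (\<lambda>p. norm (snd p) ^ 2)"
    using assms(1,2) coupling_marginals(3,4)[OF cpl msq] by (simp_all add: P2_def)
  have M2: "M2 \<mu> + M2 \<nu> = sqrt (\<integral>p. norm (fst p) ^ 2 \<partial>\<gamma>) + sqrt (\<integral>p. norm (snd p) ^ 2 \<partial>\<gamma>)"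
    unfolding M2_def coupling_marginals(1,2)[OF cpl msq] ..
  define D where "D p = norm (fst p - snd p)" for p :: "(real^'n) \<times> (real^'n)"
  define E where "E p = norm (fst p + snd p)" for p :: "(real^'n) \<times> (real^'n)"
  have mD: "D \<in> borel_measurable \<gamma>" and mE: "E \<in> borel_measurable \<gamma>"
    unfolding D_def E_def using mf ms by measurable
  have E: "integrable \<gamma> (\<lambda>p. E p ^ 2)" "sqrt (\<integral>p. E p ^ 2 \<partial>\<gamma>) \<le> M2 \<mu> + M2 \<nu>"
    unfolding M2 E_def by (rule sqrt_integral_norm_add_square_le[OF mf ms i\<mu> i\<nu>])+
  have "integrable \<gamma> (\<lambda>p. norm (fst p + - snd p) ^ 2)"
    by (rule sqrt_integral_norm_add_square_le(1)) (use mf ms i\<mu> i\<nu> in auto)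
  hence iD: "integrable \<gamma> (\<lambda>p. D p ^ 2)"
    by (simp add: D_def)
  note DE = integral_abs_mult_le_sqrt[OF mD mE iD E(1)]
  have iq: "integrable \<gamma> (\<lambda>p. (v \<bullet> h p)\<^sup>2)"
    if ih: "integrable \<gamma> (\<lambda>p. norm (h p) ^ 2)" and mh: "h \<in> \<gamma> \<rightarrow>\<^sub>M borel" for h
  proof (rule Bochner_Integration.integrable_bound)
    show "integrable \<gamma> (\<lambda>p. norm v ^ 2 * norm (h p) ^ 2)"
      using ih by simp
    show "(\<lambda>p. (v \<bullet> h p)\<^sup>2) \<in> borel_measurable \<gamma>"
      using mh by measurable
    have "(v \<bullet> h p)\<^sup>2 \<le> (norm v * norm (h p))\<^sup>2" for p
      using Cauchy_Schwarz_ineq2[of v "h p"] by (simp add: abs_le_square_iff[symmetric] abs_mult)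
    thus "AE p in \<gamma>. norm ((v \<bullet> h p)\<^sup>2) \<le> norm (norm v ^ 2 * norm (h p) ^ 2)"
      by (simp add: power_mult_distrib)
  qed
  have iq\<mu>: "integrable \<gamma> (\<lambda>p. (v \<bullet> fst p)\<^sup>2)" and iq\<nu>: "integrable \<gamma> (\<lambda>p. (v \<bullet> snd p)\<^sup>2)"
    using iq[OF i\<mu> mf] iq[OF i\<nu> ms] by auto
  have pw: "\<bar>(v \<bullet> fst p)\<^sup>2 - (v \<bullet> snd p)\<^sup>2\<bar> \<le> norm v ^ 2 * \<bar>D p * E p\<bar>" for p
  proof -
    have "(v \<bullet> fst p)\<^sup>2 - (v \<bullet> snd p)\<^sup>2 = (v \<bullet> (fst p - snd p)) * (v \<bullet> (fst p + snd p))"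
      by (simp add: inner_diff_right inner_add_right power2_eq_square algebra_simps)
    hence "\<bar>(v \<bullet> fst p)\<^sup>2 - (v \<bullet> snd p)\<^sup>2\<bar> = \<bar>v \<bullet> (fst p - snd p)\<bar> * \<bar>v \<bullet> (fst p + snd p)\<bar>"
      by (simp add: abs_mult)
    also have "\<dots> \<le> (norm v * D p) * (norm v * E p)"
      unfolding D_def E_def by (intro mult_mono Cauchy_Schwarz_ineq2) auto
    finally show ?thesis by (simp add: D_def E_def power2_eq_square mult_ac)
  qed
  have msq_inner: "(\<lambda>x::real^'n. (v \<bullet> x)\<^sup>2) \<in> borel_measurable borel"
    by measurable
  have "\<bar>(\<integral>x. (v \<bullet> x)\<^sup>2 \<partial>\<mu>) - (\<integral>y. (v \<bullet> y)\<^sup>2 \<partial>\<nu>)\<bar>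
        = \<bar>\<integral>p. (v \<bullet> fst p)\<^sup>2 - (v \<bullet> snd p)\<^sup>2 \<partial>\<gamma>\<bar>"
    unfolding coupling_marginals(1,2)[OF cpl msq_inner] using iq\<mu> iq\<nu> by simp
  also have "\<dots> \<le> (\<integral>p. \<bar>(v \<bullet> fst p)\<^sup>2 - (v \<bullet> snd p)\<^sup>2\<bar> \<partial>\<gamma>)"
    by (rule integral_abs_bound)
  also have "\<dots> \<le> (\<integral>p. norm v ^ 2 * \<bar>D p * E p\<bar> \<partial>\<gamma>)"
    by (rule integral_mono) (use iq\<mu> iq\<nu> DE(1) pw in auto)
  also have "\<dots> \<le> norm v ^ 2 * (sqrt (\<integral>p. D p ^ 2 \<partial>\<gamma>) * sqrt (\<integral>p. E p ^ 2 \<partial>\<gamma>))"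
    using DE(2) by (simp add: mult_left_mono)
  also have "\<dots> \<le> norm v ^ 2 * (sqrt (\<integral>p. D p ^ 2 \<partial>\<gamma>) * (M2 \<mu> + M2 \<nu>))"
    using E(2) by (simp add: mult_left_mono)
  finally show ?thesis by (simp add: D_def)
qed

lemma abs_eigenvalue_minus_tight_bound_le:
  fixes \<mu> \<nu> :: "(real^'n) measure"
  assumes "P2 \<mu>" and "P2 \<nu>" and "coupling \<gamma> \<mu> \<nu>"
    and tight: "\<And>x. (\<integral>y. (x \<bullet> y)\<^sup>2 \<partial>\<nu>) = A * norm x ^ 2"
    and "l \<in> eigenvalues (frame_op \<mu>)"
  shows "\<bar>l - A\<bar> \<le> sqrt (\<integral>p. norm (fst p - snd p) ^ 2 \<partial>\<gamma>) * (M2 \<mu> + M2 \<nu>)"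
proof -
  obtain v where "v \<noteq> 0" and ev: "frame_op \<mu> *v v = l *\<^sub>R v"
    using assms(5) unfolding eigenvalues_def by auto
  have lv: "l * norm v ^ 2 = (\<integral>y. (v \<bullet> y)\<^sup>2 \<partial>\<mu>)"
    using frame_op_quadratic_form[of \<mu> v] assms(1) ev
    by (simp add: P2_def power2_norm_eq_inner)
  have "\<bar>l - A\<bar> * norm v ^ 2 = \<bar>(\<integral>x. (v \<bullet> x)\<^sup>2 \<partial>\<mu>) - (\<integral>y. (v \<bullet> y)\<^sup>2 \<partial>\<nu>)\<bar>"
    unfolding tight lv[symmetric] by (simp add: abs_mult flip: left_diff_distrib)
  also have "\<dots> \<le> norm v ^ 2 * (sqrt (\<integral>p. norm (fst p - snd p) ^ 2 \<partial>\<gamma>) * (M2 \<mu> + M2 \<nu>))"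
    by (rule quadratic_form_coupling_diff[OF assms(1-3)])
  finally show ?thesis
    using \<open>v \<noteq> 0\<close> by (simp add: mult.commute)
qed

lemma W2_lower_bound:
  assumes "coupling \<gamma>\<^sub>0 \<mu> \<nu>"
    and bound: "\<And>\<gamma>. coupling \<gamma> \<mu> \<nu> \<Longrightarrow> K \<le> sqrt (\<integral>p. norm (fst p - snd p) ^ 2 \<partial>\<gamma>)"
  shows "K \<le> W2 \<mu> \<nu>"
proof -
  define S where "S = {(\<integral>p. norm (fst p - snd p) ^ 2 \<partial>\<gamma>) | \<gamma>. coupling \<gamma> \<mu> \<nu>}"
  have "S \<noteq> {}" using assms(1) by (auto simp: S_def)
  have S_nonneg: "c \<ge> 0" if "c \<in> S" for c using that by (auto simp: S_def)
  show ?thesis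
  proof (cases "K \<le> 0")
    case True
    have "0 \<le> Inf S" using \<open>S \<noteq> {}\<close> S_nonneg by (intro cInf_greatest) auto
    thus ?thesis using True by (simp add: W2_def S_def[symmetric] order_trans[OF _ real_sqrt_ge_zero])
  next
    case False
    have "K\<^sup>2 \<le> c" if cS: "c \<in> S" for c
    proof -
      obtain \<gamma> where "coupling \<gamma> \<mu> \<nu>" and c: "c = (\<integral>p. norm (fst p - snd p) ^ 2 \<partial>\<gamma>)"
        using cS unfolding S_def by blast
      hence "K\<^sup>2 \<le> (sqrt c)\<^sup>2" using bound False by (intro power_mono) auto
      thus ?thesis using S_nonneg[OF cS] by simp
    qed
    hence "K\<^sup>2 \<le> Inf S" using \<open>S \<noteq> {}\<close> by (intro cInf_greatest) auto
    thus ?thesis by (simp add: W2_def S_def[symmetric] real_le_rsqrt)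
  qed
qed

lemma (in prob_space) distr_pair_snd:
  assumes "prob_space N"
  shows "distr (N \<Otimes>\<^sub>M M) M snd = M"
proof (intro measure_eqI)
  interpret N: prob_space N by fact
  fix A assume A: "A \<in> sets (distr (N \<Otimes>\<^sub>M M) M snd)"
  hence "emeasure (distr (N \<Otimes>\<^sub>M M) M snd) A = emeasure (N \<Otimes>\<^sub>M M) (space N \<times> A)"
    by (auto simp add: emeasure_distr space_pair_measure dest: sets.sets_into_space
             intro!: arg_cong2[where f=emeasure])
  with A show "emeasure (distr (N \<Otimes>\<^sub>M M) M snd) A = emeasure M A"
    by (simp add: emeasure_pair_measure_Times N.emeasure_space_1)
qed simp

lemma coupling_pair_measure:
  assumes "P2 \<mu>" and "P2 \<nu>"
  shows "coupling (\<mu> \<Otimes>\<^sub>M \<nu>) \<mu> \<nu>"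
proof -
  have ps: "prob_space \<mu>" "prob_space \<nu>" and s: "sets \<mu> = sets borel" "sets \<nu> = sets borel"
    using assms unfolding P2_def by auto
  have "sets (\<mu> \<Otimes>\<^sub>M \<nu>) = sets borel"
    using sets_pair_measure_cong[OF s] by (metis borel_prod)
  moreover have "distr (\<mu> \<Otimes>\<^sub>M \<nu>) borel fst = \<mu>"
    using prob_space.distr_pair_fst[OF ps(2), of \<mu>] by (simp add: s cong: distr_cong)
  moreover have "distr (\<mu> \<Otimes>\<^sub>M \<nu>) borel snd = \<nu>"
    using prob_space.distr_pair_snd[OF ps(2,1)] by (simp add: s cong: distr_cong)
  ultimately show ?thesis
    using prob_space_pair[OF ps] by (simp add: coupling_def)
qed

text \<open>Outside the case of a finite nonempty set, \<^const>\<open>Max\<close> and \<^const>\<open>Min\<close> are the same junk value.\<close>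
lemma Max_eq_Min_degenerate:
  fixes A :: "real set"
  assumes "\<not> (finite A \<and> A \<noteq> {})"
  shows "Max A = Min A"
  using assms unfolding Max.eq_fold' Min.eq_fold'
  by (cases "A = {}") (auto simp: fold_infinite)

lemma eigenvalue_spread_le_coupling_cost:
  fixes \<mu> \<nu> :: "(real^'n) measure"
  assumes "P2 \<mu>" and "P2 \<nu>" and cpl: "coupling \<gamma> \<mu> \<nu>" and "tight_prob_frame \<nu>"
  shows "lambda_max \<mu> - lambda_min \<mu>
         \<le> 2 * (sqrt (\<integral>p. norm (fst p - snd p) ^ 2 \<partial>\<gamma>) * (M2 \<mu> + M2 \<nu>))"
proof (cases "finite (eigenvalues (frame_op \<mu>)) \<and> eigenvalues (frame_op \<mu>) \<noteq> {}")
  case True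
  obtain A where tight: "\<And>x. (\<integral>y. (x \<bullet> y)\<^sup>2 \<partial>\<nu>) = A * norm x ^ 2"
    using assms(4) unfolding tight_prob_frame_def by auto
  from True have "lambda_max \<mu> \<in> eigenvalues (frame_op \<mu>)" "lambda_min \<mu> \<in> eigenvalues (frame_op \<mu>)"
    unfolding lambda_max_def lambda_min_def by auto
  from this[THEN abs_eigenvalue_minus_tight_bound_le[OF assms(1,2) cpl tight]]
  show ?thesis by linarith
next
  case False
  thus ?thesis
    by (simp add: lambda_max_def lambda_min_def Max_eq_Min_degenerate M2_def)
qed

theorem mainTheorem2:
  fixes \<mu> \<nu> :: "(real^'n) measure"
  assumes "P2 \<mu>" and "prob_frame \<mu>" and "\<not> tight_prob_frame \<mu>"
    and "P2 \<nu>" and "prob_frame \<nu>" and "tight_prob_frame \<nu>"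
  shows "W2 \<mu> \<nu> \<ge> (lambda_max \<mu> - lambda_min \<mu>) / (4 * (M2 \<mu> + M2 \<nu>))"
proof (rule W2_lower_bound[OF coupling_pair_measure[OF assms(1,4)]])
  fix \<gamma> assume cpl: "coupling \<gamma> \<mu> \<nu>"
  define M where "M = M2 \<mu> + M2 \<nu>"
  define c where "c = sqrt (\<integral>p. norm (fst p - snd p) ^ 2 \<partial>\<gamma>)"
  have "M \<ge> 0" "c \<ge> 0" by (simp_all add: M_def M2_def c_def)
  have "lambda_max \<mu> - lambda_min \<mu> \<le> 2 * (c * M)"
    unfolding c_def M_def by (rule eigenvalue_spread_le_coupling_cost[OF assms(1,4) cpl assms(6)])
  hence "lambda_max \<mu> - lambda_min \<mu> \<le> c * (4 * M)"
    using mult_nonneg_nonneg[OF \<open>c \<ge> 0\<close> \<open>M \<ge> 0\<close>] by linarith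
  with \<open>M \<ge> 0\<close> \<open>c \<ge> 0\<close> show "(lambda_max \<mu> - lambda_min \<mu>) / (4 * (M2 \<mu> + M2 \<nu>)) \<le> c"
    unfolding M_def[symmetric] by (cases "M = 0") (simp_all add: pos_divide_le_eq)
qed

end
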